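(* Let $f$ be an entire transcendental function of perfectly regular growth having order $\rho$ and type $\tau$. Then the quasi-optimal radius satisfies \[ r_\diamond(n)\sim\Big(\frac{n}{\tau\rho}\Big)^{1/\rho}\qquad(n\to\infty). \]
   Context: $M(r)=\max_\theta|f(re^{i\theta})|$. The order is $\rho=\limsup_{r\to\infty}\log\log M(r)/\log r$. An entire transcendental function of order $0<\rho<\infty$ is of perfectly regular growth if the limit $\tau=\lim_{r\to\infty}\log M(r)/r^\rho$ exists and is positive and finite; $\tau$ is its type. The quasi-optimal radius $r_\diamond(n)$ is the unique minimizer over $r>0$ of $r^{-n}M(r)$ (defined for $n$ larger than the index of the first nonzero Taylor coefficient). *)

theory Defs
  imports "HOL-Complex_Analysis.Complex_Analysis" "HOL-Library.Landau_Symbols"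
    "HOL-Computational_Algebra.Polynomial"
begin

definition max_mod :: "(complex \<Rightarrow> complex) \<Rightarrow> real \<Rightarrow> real" where
  "max_mod f r = Sup ((\<lambda>z. norm (f z)) ` sphere 0 r)"

definition entire_transcendental :: "(complex \<Rightarrow> complex) \<Rightarrow> bool" where
  "entire_transcendental f \<longleftrightarrow> f holomorphic_on UNIV \<and> \<not> (\<exists>p. \<forall>z. f z = poly p z)"

definition entire_order :: "(complex \<Rightarrow> complex) \<Rightarrow> ereal" where
  "entire_order f = Limsup at_top (\<lambda>r::real. ereal (ln (ln (max_mod f r)) / ln r))"

definition perfectly_regular_growth :: "(complex \<Rightarrow> complex) \<Rightarrow> real \<Rightarrow> real \<Rightarrow> bool" where
  "perfectly_regular_growth f \<rho> \<tau> \<longleftrightarrow>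
     entire_transcendental f \<and> 0 < \<rho> \<and> entire_order f = ereal \<rho> \<and>
     0 < \<tau> \<and> ((\<lambda>r. ln (max_mod f r) / r powr \<rho>) \<longlongrightarrow> \<tau>) at_top"

definition quasi_opt_radius :: "(complex \<Rightarrow> complex) \<Rightarrow> nat \<Rightarrow> real" where
  "quasi_opt_radius f n = (THE r. 0 < r \<and> (\<forall>s>0. max_mod f r / r ^ n \<le> max_mod f s / s ^ n))"

end

theory Submission
  imports Defs
begin

text \<open>Write \<open>g(r) = ln M(r)\<close> and \<open>r\<^sub>n\<close> for the quasi-optimal radius, so that \<open>r\<^sub>n\<close>
  minimises \<open>g(r) - n ln r\<close>. The minimiser exists because \<open>M(r) / r\<^sup>n\<close> tends to infinity at both
  ends of \<open>(0, \<infinity>)\<close> (Cauchy's estimates, plus infinitely many nonzero Taylor coefficients), and it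
  is unique because two minimisers \<open>r\<^sub>1 < r\<^sub>2\<close> would make \<open>|f(z) / z\<^sup>n|\<close> attain its maximum over
  the annulus \<open>r\<^sub>1 \<le> |z| \<le> r\<^sub>2\<close> at an interior point, forcing \<open>f = c z\<^sup>n\<close>.
  Comparing \<open>r\<^sub>n\<close> with \<open>c r\<^sub>n\<close>, where \<open>c\<^sup>\<rho> = 1 + h\<close>, minimality gives
  \<open>n ln (1 + h) / \<rho> \<le> g(c r\<^sub>n) - g(r\<^sub>n) \<approx> \<tau> h r\<^sub>n\<^sup>\<rho>\<close>. For \<open>h > 0\<close> this bounds \<open>r\<^sub>n\<^sup>\<rho> / n\<close>
  from below, for \<open>h < 0\<close> from above, in both cases by roughly \<open>ln (1 + h) / (\<tau> \<rho> h)\<close>;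
  letting \<open>h \<rightarrow> 0\<close> gives \<open>r\<^sub>n\<^sup>\<rho> / n \<rightarrow> 1 / (\<tau> \<rho>)\<close>.\<close>

section \<open>Minimisers of \<open>g(r) - n ln r\<close>\<close>

lemma exists_minimizer_on_positive_reals:
  fixes \<phi> :: "real \<Rightarrow> real"
  assumes cont: "continuous_on {0<..} \<phi>"
    and at_zero: "filterlim \<phi> at_top (at_right 0)" and at_infinity: "filterlim \<phi> at_top at_top"
  shows "\<exists>r>0. \<forall>s>0. \<phi> r \<le> \<phi> s"
proof -
  have "\<forall>\<^sub>F s in at_right 0. \<phi> 1 < \<phi> s"
    using at_zero by (simp add: filterlim_at_top_dense)
  then obtain a where a: "0 < a" "a \<le> 1" "\<And>s. 0 < s \<Longrightarrow> s < a \<Longrightarrow> \<phi> 1 < \<phi> s"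
    unfolding eventually_at_right_field by (metis min.absorb_iff2 min_less_iff_conj zero_less_one nle_le)
  have "\<forall>\<^sub>F s in at_top. \<phi> 1 < \<phi> s"
    using at_infinity by (simp add: filterlim_at_top_dense)
  then obtain b where b: "1 \<le> b" "\<And>s. b < s \<Longrightarrow> \<phi> 1 < \<phi> s"
    unfolding eventually_at_top_linorder by (metis le_less_trans max.cobounded1 max.cobounded2 less_le_not_le)
  have "continuous_on {a..b} \<phi>"
    using a by (intro continuous_on_subset[OF cont]) auto
  then obtain r where r: "r \<in> {a..b}" "\<And>s. s \<in> {a..b} \<Longrightarrow> \<phi> r \<le> \<phi> s"
    using continuous_attains_inf[of "{a..b}" \<phi>] a b by auto
  have "\<phi> r \<le> \<phi> s" if "0 < s" for s
  proof (cases "s \<in> {a..b}")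
    case False
    then have "\<phi> 1 < \<phi> s" using a b that by fastforce
    moreover have "\<phi> r \<le> \<phi> 1" using a b by (intro r(2)) auto
    ultimately show ?thesis by simp
  qed (use r in simp)
  moreover have "0 < r" using r a by simp
  ultimately show ?thesis by blast
qed

lemma minimizers_tendsto_at_top:
  fixes g :: "real \<Rightarrow> real" and r :: "nat \<Rightarrow> real"
  assumes lower: "\<And>x. 0 < x \<Longrightarrow> A + real k * ln x \<le> g x"
    and minimizes: "\<forall>\<^sub>F n in sequentially. 0 < r n \<and> (\<forall>s>0. g (r n) - real n * ln (r n) \<le> g s - real n * ln s)"
  shows "filterlim r at_top sequentially"
  unfolding filterlim_at_top
proof
  fix Z :: real
  define K where "K = max Z 1"
  have K: "1 \<le> K" "Z \<le> K" by (auto simp: K_def)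
  define C where "C = g (2 * K) - A"
  have "\<forall>\<^sub>F n in sequentially. C / ln 2 < real n"
    by (rule filterlim_real_sequentially[unfolded filterlim_at_top_dense, rule_format])
  with minimizes eventually_ge_at_top[of k]
  show "\<forall>\<^sub>F n in sequentially. Z \<le> r n"
  proof eventually_elim
    case (elim n)
    then have r: "0 < r n" and le: "g (r n) - real n * ln (r n) \<le> g (2 * K) - real n * ln (2 * K)"
      using K by auto
    show "Z \<le> r n"
    proof (rule ccontr)
      assume "\<not> Z \<le> r n"
      then have "ln (r n) \<le> ln K" using K r by simp
      then have "(real n - real k) * ln (r n) \<le> (real n - real k) * ln K"
        using elim by (intro mult_left_mono) auto
      moreover have "0 \<le> real k * ln K" using K by simp
      moreover have "ln (2 * K) = ln 2 + ln K" using K by (simp add: ln_mult)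
      ultimately have "real n * ln 2 \<le> C"
        using le lower[OF r] unfolding C_def by (simp add: algebra_simps)
      then show False using elim by (simp add: field_simps)
    qed
  qed
qed

context
  fixes g :: "real \<Rightarrow> real" and r :: "nat \<Rightarrow> real" and \<rho> \<tau> :: real
  assumes rho: "0 < \<rho>" and tau: "0 < \<tau>"
    and growth: "((\<lambda>x. g x / x powr \<rho>) \<longlongrightarrow> \<tau>) at_top"
    and r_at_top: "filterlim r at_top sequentially"
    and minimizes: "\<forall>\<^sub>F n in sequentially. \<forall>s>0. g (r n) - real n * ln (r n) \<le> g s - real n * ln s"
begin

lemma eventually_ln_one_plus_less:
  assumes h: "-1 < h" and eta: "0 < \<eta>"
  shows "\<forall>\<^sub>F n in sequentially. ln (1 + h) < \<rho> * (r n powr \<rho> / real n) * (\<tau> * h + \<eta> * (2 + h))"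
proof -
  define c where "c = (1 + h) powr (1 / \<rho>)"
  have c: "0 < c" "c powr \<rho> = 1 + h" "ln c = ln (1 + h) / \<rho>"
    using h rho by (simp_all add: c_def powr_powr)
  have cr_at_top: "filterlim (\<lambda>n. c * r n) at_top sequentially"
    by (rule filterlim_tendsto_pos_mult_at_top[OF tendsto_const c(1) r_at_top])
  note lim_r = filterlim_compose[OF growth r_at_top]
  note lim_cr = filterlim_compose[OF growth cr_at_top]
  have "\<forall>\<^sub>F n in sequentially. 0 < r n"
    using r_at_top by (simp add: filterlim_at_top_dense)
  moreover have "\<forall>\<^sub>F n in sequentially. \<tau> - \<eta> < g (r n) / r n powr \<rho>"
    using eta by (intro order_tendstoD(1)[OF lim_r]) simp
  moreover have "\<forall>\<^sub>F n in sequentially. g (c * r n) / (c * r n) powr \<rho> < \<tau> + \<eta>"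
    using eta by (intro order_tendstoD(2)[OF lim_cr]) simp
  ultimately show ?thesis using minimizes eventually_gt_at_top[of 0]
  proof eventually_elim
    case (elim n)
    define R where "R = r n powr \<rho>"
    have R: "0 < R" "(c * r n) powr \<rho> = (1 + h) * R"
      using elim c by (simp_all add: R_def powr_mult)
    have "0 < (1 + h) * R" using h R by simp
    moreover have "g (c * r n) / ((1 + h) * R) < \<tau> + \<eta>"
      unfolding R(2)[symmetric] using elim by blast
    ultimately have upper: "g (c * r n) < (\<tau> + \<eta>) * ((1 + h) * R)"
      by (simp only: pos_divide_less_eq)
    have lower: "(\<tau> - \<eta>) * R < g (r n)"
      using elim R by (simp add: R_def field_simps)
    have "g (r n) - real n * ln (r n) \<le> g (c * r n) - real n * ln (c * r n)"
      using elim c(1) by (meson mult_pos_pos)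
    also have "ln (c * r n) = ln c + ln (r n)"
      using elim c(1) by (simp add: ln_mult)
    finally have "real n * (ln (1 + h) / \<rho>) < R * (\<tau> * h + \<eta> * (2 + h))"
      using upper lower c by (simp add: algebra_simps)
    then show ?case
      using elim rho by (simp add: R_def field_simps)
  qed
qed

lemma minimizer_powr_ratio_tendsto: "((\<lambda>n. r n powr \<rho> / real n) \<longlongrightarrow> 1 / (\<tau> * \<rho>)) sequentially"
proof -
  define D where "D h = \<rho> * h * (\<tau> + h * (2 + h))" for h
  define F where "F h = ln (1 + h) / D h" for h
  have "((\<lambda>h. ln (1 + h) / h / (\<rho> * (\<tau> + h * (2 + h)))) \<longlongrightarrow> 1 / (\<rho> * (\<tau> + 0 * (2 + 0)))) (at 0)"
    using rho tau by (intro tendsto_intros lim_ln_1_plus_x_over_x_at_0) auto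
  moreover have "F = (\<lambda>h. ln (1 + h) / h / (\<rho> * (\<tau> + h * (2 + h))))"
    by (simp add: fun_eq_iff F_def D_def divide_divide_eq_left mult_ac)
  ultimately have F: "(F \<longlongrightarrow> 1 / (\<tau> * \<rho>)) (at 0)"
    by (simp add: mult.commute)
  \<comment> \<open>With \<open>\<eta> = h\<^sup>2\<close> the error term is of higher order than \<open>\<tau> h\<close>.\<close>
  have bound: "\<forall>\<^sub>F n in sequentially. ln (1 + h) < r n powr \<rho> / real n * D h" if "-1 < h" "h \<noteq> 0" for h
    using eventually_ln_one_plus_less[OF that(1) zero_less_power2[THEN iffD2, OF that(2)]]
    by (rule eventually_mono) (simp add: D_def algebra_simps power2_eq_square)
  have lower: "\<forall>\<^sub>F n in sequentially. F h < r n powr \<rho> / real n" if h: "0 < h" for h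
  proof -
    have "0 < D h" using rho tau h by (simp add: D_def add_pos_pos)
    then show ?thesis
      using bound[of h] h by (auto simp: F_def divide_less_eq elim!: eventually_mono)
  qed
  have upper: "\<forall>\<^sub>F n in sequentially. r n powr \<rho> / real n < F h"
    if h: "-1 < h" "h < 0" "0 < \<tau> + h * (2 + h)" for h
  proof -
    have "D h < 0" unfolding D_def using rho h by (intro mult_neg_pos mult_pos_neg) auto
    then show ?thesis
      using bound[of h] h by (auto simp: F_def less_divide_eq elim!: eventually_mono)
  qed
  have F_right: "(F \<longlongrightarrow> 1 / (\<tau> * \<rho>)) (at_right 0)"
    and F_left: "(F \<longlongrightarrow> 1 / (\<tau> * \<rho>)) (at_left 0)"
    using filterlim_within_subset[OF F] by auto
  show ?thesis
  proof (rule order_tendstoI)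
    fix a assume "a < 1 / (\<tau> * \<rho>)"
    then have "\<forall>\<^sub>F h in at_right 0. a < F h \<and> 0 < h"
      using order_tendstoD(1)[OF F_right] eventually_at_right_less[of 0] by (intro eventually_conj)
    then obtain h where "a < F h" "0 < h"
      using eventually_happens by fastforce
    with lower[of h] show "\<forall>\<^sub>F n in sequentially. a < r n powr \<rho> / real n"
      by (auto elim: eventually_mono)
  next
    fix b assume "1 / (\<tau> * \<rho>) < b"
    moreover have "((\<lambda>h. \<tau> + h * (2 + h)) \<longlongrightarrow> \<tau> + 0 * (2 + 0)) (at_left 0)"
      by (intro tendsto_intros)
    ultimately have "\<forall>\<^sub>F h in at_left 0. F h < b \<and> 0 < \<tau> + h * (2 + h) \<and> h \<in> {-1<..<0}"
      using order_tendstoD(2)[OF F_left] order_tendstoD(1) tau eventually_at_left_real[of "-1" 0]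
      by (intro eventually_conj) auto
    then obtain h where "F h < b" "0 < \<tau> + h * (2 + h)" "-1 < h" "h < 0"
      using eventually_happens by fastforce
    with upper[of h] show "\<forall>\<^sub>F n in sequentially. r n powr \<rho> / real n < b"
      by (auto elim: eventually_mono)
  qed
qed

end

lemma asymp_equiv_of_powr_ratio_tendsto:
  fixes r :: "nat \<Rightarrow> real"
  assumes rho: "0 < \<rho>" and c: "0 < c" and pos: "\<forall>\<^sub>F n in sequentially. 0 < r n"
    and lim: "((\<lambda>n. r n powr \<rho> / real n) \<longlongrightarrow> 1 / c) sequentially"
  shows "r \<sim>[sequentially] (\<lambda>n. (real n / c) powr (1 / \<rho>))"
proof (rule asymp_equivI')
  have "((\<lambda>n. (r n powr \<rho> / real n * c) powr (1 / \<rho>)) \<longlongrightarrow> (1 / c * c) powr (1 / \<rho>)) sequentially"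
    using c by (intro tendsto_intros lim) auto
  then have "((\<lambda>n. (r n powr \<rho> / real n * c) powr (1 / \<rho>)) \<longlongrightarrow> 1) sequentially"
    using c by simp
  moreover have "\<forall>\<^sub>F n in sequentially.
      (r n powr \<rho> / real n * c) powr (1 / \<rho>) = r n / (real n / c) powr (1 / \<rho>)"
    using pos eventually_gt_at_top[of 0]
  proof eventually_elim
    case (elim n)
    have "(r n powr \<rho> / real n * c) powr (1 / \<rho>) = (r n powr \<rho> / (real n / c)) powr (1 / \<rho>)"
      by simp
    also have "\<dots> = (r n powr \<rho>) powr (1 / \<rho>) / (real n / c) powr (1 / \<rho>)"
      by (rule powr_divide)
    also have "(r n powr \<rho>) powr (1 / \<rho>) = r n"
      using elim rho by (simp add: powr_powr)
    finally show ?case .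
  qed
  ultimately show "((\<lambda>n. r n / (real n / c) powr (1 / \<rho>)) \<longlongrightarrow> 1) sequentially"
    by (rule Lim_transform_eventually)
qed

section \<open>The maximum modulus\<close>

lemma norm_le_max_mod:
  fixes f :: "complex \<Rightarrow> complex"
  assumes "continuous_on (sphere 0 r) f" "norm z = r"
  shows "norm (f z) \<le> max_mod f r"
proof -
  have "compact ((\<lambda>z. norm (f z)) ` sphere 0 r)"
    using assms(1) by (intro compact_continuous_image continuous_intros) auto
  then have "bdd_above ((\<lambda>z. norm (f z)) ` sphere 0 r)"
    by (simp add: bounded_imp_bdd_above compact_imp_bounded)
  then show ?thesis
    unfolding max_mod_def using assms(2) by (intro cSup_upper) auto
qed

lemma max_mod_le:
  fixes f :: "complex \<Rightarrow> complex"
  assumes "0 \<le> r" "\<And>z. norm z = r \<Longrightarrow> norm (f z) \<le> B"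
  shows "max_mod f r \<le> B"
  unfolding max_mod_def using assms by (intro cSup_least) auto

lemma max_mod_attained:
  fixes f :: "complex \<Rightarrow> complex"
  assumes "continuous_on (sphere 0 r) f" "0 \<le> r"
  obtains z where "norm z = r" "max_mod f r = norm (f z)"
proof -
  have "continuous_on (sphere 0 r) (\<lambda>z. norm (f z))"
    using assms(1) by (intro continuous_intros)
  moreover have "sphere (0::complex) r \<noteq> {}" using assms(2) by simp
  ultimately obtain z where z: "z \<in> sphere 0 r" "\<And>w. w \<in> sphere 0 r \<Longrightarrow> norm (f w) \<le> norm (f z)"
    using continuous_attains_sup[OF compact_sphere] by blast
  have "max_mod f r = norm (f z)"
    using z norm_le_max_mod[OF assms(1)] by (intro antisym max_mod_le) (use assms(2) in auto)
  with z show thesis using that by simp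
qed

lemma coeff_mult_power_le_max_mod:
  fixes f :: "complex \<Rightarrow> complex"
  assumes "f holomorphic_on cball 0 r" "0 < r"
  shows "norm ((deriv ^^ k) f 0) / fact k * r ^ k \<le> max_mod f r"
proof -
  have cont: "continuous_on (cball 0 r) f"
    using assms(1) by (rule holomorphic_on_imp_continuous_on)
  have "norm ((deriv ^^ k) f 0) \<le> fact k * max_mod f r / r ^ k"
    using assms cont
    by (intro Cauchy_inequality norm_le_max_mod)
       (auto intro: holomorphic_on_subset continuous_on_subset simp: norm_minus_commute)
  then show ?thesis using assms(2) by (simp add: field_simps)
qed

lemma max_mod_le_add_if_close:
  fixes f :: "complex \<Rightarrow> complex"
  assumes cont: "continuous_on (cball 0 R) f"
    and close: "\<And>x y. norm x \<le> R \<Longrightarrow> norm y \<le> R \<Longrightarrow> dist x y < d \<Longrightarrow> dist (f x) (f y) < e"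
    and r: "0 < r" "r \<le> R" and s: "0 < s" "s \<le> R" and rs: "\<bar>s - r\<bar> < d"
  shows "max_mod f s \<le> max_mod f r + e"
proof (rule max_mod_le)
  show "0 \<le> s" using s by simp
  fix w :: complex assume w: "norm w = s"
  define w' where "w' = of_real (r / s) * w"
  have w': "norm w' = r" using w r s unfolding w'_def norm_mult norm_of_real by simp
  have "w - w' = of_real (1 - r / s) * w" by (simp add: w'_def algebra_simps)
  then have "norm (w - w') = \<bar>(1 - r / s) * s\<bar>"
    using w s by (simp only: norm_mult norm_of_real abs_mult)
  also have "(1 - r / s) * s = s - r" using s by (simp add: field_simps)
  finally have "dist (f w) (f w') < e"
    using close[of w w'] w w' r s rs by (simp add: dist_norm)
  moreover have "norm (f w') \<le> max_mod f r"
    using w' r cont by (intro norm_le_max_mod) (auto intro: continuous_on_subset)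
  moreover have "norm (f w) \<le> norm (f w') + dist (f w) (f w')"
    by (simp add: dist_norm norm_triangle_sub)
  ultimately show "norm (f w) \<le> max_mod f r + e" by simp
qed

lemma isCont_max_mod:
  fixes f :: "complex \<Rightarrow> complex"
  assumes cont: "continuous_on UNIV f" and r: "0 < r"
  shows "isCont (max_mod f) r"
  unfolding continuous_at_eps_delta
proof (intro allI impI)
  fix e :: real assume e: "0 < e"
  have "uniformly_continuous_on (cball 0 (2 * r)) f"
    using cont by (intro compact_uniformly_continuous) (auto intro: continuous_on_subset)
  then obtain d where d: "0 < d"
    and close: "\<And>x y. x \<in> cball 0 (2 * r) \<Longrightarrow> y \<in> cball 0 (2 * r) \<Longrightarrow> dist x y < d \<Longrightarrow> dist (f x) (f y) < e / 2"
    using e unfolding uniformly_continuous_on_def by (metis dist_commute half_gt_zero)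
  have cball_cont: "continuous_on (cball 0 (2 * r)) f"
    using cont by (rule continuous_on_subset) simp
  show "\<exists>d>0. \<forall>s. dist s r < d \<longrightarrow> dist (max_mod f s) (max_mod f r) < e"
  proof (intro exI[of _ "min d (r / 2)"] conjI allI impI)
    fix s assume "dist s r < min d (r / 2)"
    then have sr: "\<bar>s - r\<bar> < d" "\<bar>r - s\<bar> < d" "\<bar>s - r\<bar> < r / 2"
      by (auto simp: dist_real_def)
    then have s: "0 < s" "s \<le> 2 * r"
      by arith+
    have "max_mod f s \<le> max_mod f r + e / 2" "max_mod f r \<le> max_mod f s + e / 2"
      using r s sr by (auto intro!: max_mod_le_add_if_close[OF cball_cont] close)
    then show "dist (max_mod f s) (max_mod f r) < e"
      using e by (simp add: dist_real_def abs_le_iff)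
  qed (use d r in simp)
qed

section \<open>The quasi-optimal radius\<close>

lemma entire_transcendental_holomorphic_on:
  "entire_transcendental f \<Longrightarrow> f holomorphic_on S"
  unfolding entire_transcendental_def by (auto intro: holomorphic_on_subset)

lemma entire_transcendental_deriv_nonzero_above:
  assumes "entire_transcendental f"
  shows "\<exists>m>n. (deriv ^^ m) f 0 \<noteq> 0"
proof (rule ccontr)
  assume "\<not> ?thesis"
  then have vanish: "(deriv ^^ m) f 0 = 0" if "n < m" for m
    using that by auto
  define p where "p = (\<Sum>k\<le>n. monom ((deriv ^^ k) f 0 / fact k) k)"
  have "f w = poly p w" for w
  proof -
    have "(\<lambda>k. (deriv ^^ k) f 0 / fact k * w ^ k) sums f w"
      using holomorphic_power_series[of f 0 "norm w + 1" w] entire_transcendental_holomorphic_on[OF assms]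
      by simp
    moreover have "(\<lambda>k. (deriv ^^ k) f 0 / fact k * w ^ k) sums poly p w"
      unfolding p_def poly_sum poly_monom by (rule sums_finite) (auto simp: vanish)
    ultimately show ?thesis by (rule sums_unique2)
  qed
  then show False using assms by (auto simp: entire_transcendental_def)
qed

lemma max_mod_div_power_has_minimizer:
  fixes f :: "complex \<Rightarrow> complex"
  assumes f: "entire_transcendental f" and k: "(deriv ^^ k) f 0 \<noteq> 0" "k < n"
  shows "\<exists>r>0. \<forall>s>0. max_mod f r / r ^ n \<le> max_mod f s / s ^ n"
proof (rule exists_minimizer_on_positive_reals)
  note hol = entire_transcendental_holomorphic_on[OF f]
  have cont: "continuous_on UNIV f"
    by (rule holomorphic_on_imp_continuous_on[OF hol])
  show "continuous_on {0<..} (\<lambda>s. max_mod f s / s ^ n)"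
    by (intro continuous_at_imp_continuous_on ballI continuous_intros isCont_max_mod[OF cont]) auto
  define a where "a = norm ((deriv ^^ k) f 0) / fact k"
  have a: "0 < a" using k by (simp add: a_def)
  have "\<forall>\<^sub>F s in at_right 0. s \<in> {0::real<..<1}"
    using eventually_at_right_real[of 0 1] by simp
  then have "\<forall>\<^sub>F s in at_right 0. a * inverse s \<le> max_mod f s / s ^ n"
  proof eventually_elim
    case (elim s)
    then have s: "0 < s" "s < 1" by auto
    have "s ^ (n - k) \<le> s ^ 1"
      using s k by (intro power_decreasing) auto
    moreover have "s ^ n = s ^ k * s ^ (n - k)"
      using k by (simp add: power_add[symmetric])
    ultimately have "a * inverse s \<le> a * s ^ k / s ^ n"
      using s a by (simp add: field_simps)
    also have "\<dots> \<le> max_mod f s / s ^ n"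
      using coeff_mult_power_le_max_mod[OF hol s(1), of k] s
      by (intro divide_right_mono) (simp_all add: a_def)
    finally show ?case .
  qed
  then show "filterlim (\<lambda>s. max_mod f s / s ^ n) at_top (at_right 0)"
    by (rule filterlim_at_top_mono[rotated])
       (intro filterlim_tendsto_pos_mult_at_top[OF tendsto_const a filterlim_inverse_at_top_right])
  obtain m where m: "n < m" "(deriv ^^ m) f 0 \<noteq> 0"
    using entire_transcendental_deriv_nonzero_above[OF f] by blast
  define b where "b = norm ((deriv ^^ m) f 0) / fact m"
  have b: "0 < b" using m by (simp add: b_def)
  have "\<forall>\<^sub>F s in at_top. b * s \<le> max_mod f s / s ^ n"
    using eventually_ge_at_top[of 1]
  proof eventually_elim
    case (elim s)
    have "s ^ 1 \<le> s ^ (m - n)"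
      using elim m by (intro power_increasing) auto
    moreover have "s ^ m = s ^ n * s ^ (m - n)"
      using m by (simp add: power_add[symmetric])
    ultimately have "b * s \<le> b * s ^ m / s ^ n"
      using elim b by (simp add: field_simps)
    also have "\<dots> \<le> max_mod f s / s ^ n"
      using coeff_mult_power_le_max_mod[OF hol, of s m] elim
      by (intro divide_right_mono) (simp_all add: b_def)
    finally show ?case .
  qed
  then show "filterlim (\<lambda>s. max_mod f s / s ^ n) at_top at_top"
    by (rule filterlim_at_top_mono[rotated])
       (intro filterlim_tendsto_pos_mult_at_top[OF tendsto_const b filterlim_ident])
qed

lemma norm_div_power_le_on_annulus:
  fixes f :: "complex \<Rightarrow> complex"
  assumes hol: "f holomorphic_on UNIV" and r1: "0 < r1"
    and circles: "\<And>w. norm w = r1 \<or> norm w = r2 \<Longrightarrow> norm (f w / w ^ n) \<le> m"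
    and z: "r1 \<le> norm z" "norm z \<le> r2"
  shows "norm (f z / z ^ n) \<le> m"
proof -
  define S :: "complex set" where "S = {w. r1 \<le> norm w \<and> norm w \<le> r2}"
  have "closed S" unfolding S_def
    by (intro closed_Collect_conj closed_Collect_le continuous_intros)
  have "0 \<notin> S" using r1 by (simp add: S_def)
  have hol_S: "(\<lambda>w. f w / w ^ n) holomorphic_on S"
    using \<open>0 \<notin> S\<close> by (intro holomorphic_intros holomorphic_on_subset[OF hol]) auto
  show ?thesis
  proof (rule maximum_modulus_frontier[where S = S and f = "\<lambda>w. f w / w ^ n"])
    show "(\<lambda>w. f w / w ^ n) holomorphic_on interior S"
      by (rule holomorphic_on_subset[OF hol_S interior_subset])
    show "continuous_on (closure S) (\<lambda>w. f w / w ^ n)"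
      using \<open>closed S\<close> hol_S by (simp add: holomorphic_on_imp_continuous_on)
    show "bounded S"
      by (rule bounded_subset[of "cball 0 r2"]) (auto simp: S_def)
    show "z \<in> S" using z by (simp add: S_def)
  next
    fix w assume w: "w \<in> frontier S"
    have "{v. r1 < norm v \<and> norm v < r2} \<subseteq> interior S"
      by (rule interior_maximal) (auto simp: S_def intro!: open_Collect_conj open_Collect_less continuous_intros)
    moreover have "w \<in> S" "w \<notin> interior S"
      using w \<open>closed S\<close> by (auto simp: frontier_def)
    ultimately have "norm w = r1 \<or> norm w = r2"
      unfolding S_def by (metis (mono_tags, lifting) mem_Collect_eq order_le_less subsetD)
    then show "norm (f w / w ^ n) \<le> m" by (rule circles)
  qed
qed

lemma monomial_of_local_max_norm_div_power:
  fixes f :: "complex \<Rightarrow> complex"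
  assumes hol: "f holomorphic_on UNIV" and e: "0 < e" "e \<le> norm z0"
    and local_max: "\<And>z. z \<in> ball z0 e \<Longrightarrow> norm (f z / z ^ n) \<le> norm (f z0 / z0 ^ n)"
  shows "\<exists>c. \<forall>z. f z = c * z ^ n"
proof -
  have nonzero: "z \<noteq> 0" if "z \<in> ball z0 e" for z
    using that e by auto
  have "(\<lambda>z. f z / z ^ n) holomorphic_on ball z0 e"
    using nonzero by (intro holomorphic_intros holomorphic_on_subset[OF hol]) auto
  then have "(\<lambda>z. f z / z ^ n) constant_on ball z0 e"
    by (rule maximum_modulus_principle[where U = "ball z0 e" and \<xi> = z0]) (use e local_max in auto)
  then obtain c where c: "\<And>z. z \<in> ball z0 e \<Longrightarrow> f z / z ^ n = c"
    unfolding constant_on_def by blast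
  have "f z = c * z ^ n" for z
  proof (rule analytic_continuation_open[where s = "ball z0 e" and s' = UNIV and g = "\<lambda>z. c * z ^ n"])
    show "f w = c * w ^ n" if "w \<in> ball z0 e" for w
      using c[OF that] nonzero[OF that] by (simp add: field_simps)
  qed (use e hol in \<open>auto intro!: holomorphic_intros\<close>)
  then show ?thesis by blast
qed

lemma max_mod_div_power_minimizer_unique:
  fixes f :: "complex \<Rightarrow> complex"
  assumes hol: "f holomorphic_on UNIV" and not_monomial: "\<nexists>c. \<forall>z. f z = c * z ^ n"
    and r1: "0 < r1" "\<forall>s>0. max_mod f r1 / r1 ^ n \<le> max_mod f s / s ^ n"
    and r2: "0 < r2" "\<forall>s>0. max_mod f r2 / r2 ^ n \<le> max_mod f s / s ^ n"
  shows "r1 = r2"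
proof -
  have cont: "continuous_on (sphere 0 r) f" for r
    by (rule continuous_on_subset[OF holomorphic_on_imp_continuous_on[OF hol]]) simp
  have False
    if a: "0 < a" "a < b" and min_a: "\<forall>s>0. max_mod f a / a ^ n \<le> max_mod f s / s ^ n"
      and min_b: "\<forall>s>0. max_mod f b / b ^ n \<le> max_mod f s / s ^ n" for a b
  proof -
    define m where "m = max_mod f a / a ^ n"
    have m_b: "max_mod f b / b ^ n = m"
      using min_a min_b a unfolding m_def by (meson order.antisym order.strict_trans)
    have circles: "norm (f w / w ^ n) \<le> m" if "norm w = a \<or> norm w = b" for w
    proof -
      have "norm (f w / w ^ n) = norm (f w) / norm w ^ n" by (simp add: norm_divide norm_power)
      also have "\<dots> \<le> max_mod f (norm w) / norm w ^ n"
        by (intro divide_right_mono norm_le_max_mod[OF cont]) auto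
      finally show ?thesis using that m_b by (auto simp: m_def)
    qed
    define r0 where "r0 = (a + b) / 2"
    have "0 \<le> r0" using a by (simp add: r0_def)
    then obtain z0 where z0: "norm z0 = r0" "max_mod f r0 = norm (f z0)"
      using max_mod_attained[OF cont] by blast
    have "m \<le> max_mod f r0 / r0 ^ n"
      using min_a a unfolding m_def r0_def by simp
    also have "\<dots> = norm (f z0 / z0 ^ n)"
      using z0 by (simp add: norm_divide norm_power)
    finally have m_z0: "m \<le> norm (f z0 / z0 ^ n)" .
    define e where "e = (b - a) / 2"
    have annulus: "a < norm z \<and> norm z < b" if "z \<in> ball z0 e" for z
      using that z0(1) norm_triangle_ineq3[of z z0]
      by (auto simp: e_def r0_def dist_norm norm_minus_commute abs_le_iff)
    have "\<exists>c. \<forall>z. f z = c * z ^ n"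
    proof (rule monomial_of_local_max_norm_div_power[OF hol])
      show "0 < e" "e \<le> norm z0" using a z0 by (auto simp: e_def r0_def)
      show "norm (f z / z ^ n) \<le> norm (f z0 / z0 ^ n)" if "z \<in> ball z0 e" for z
        using norm_div_power_le_on_annulus[OF hol a(1) circles] annulus[OF that] m_z0
        by (meson less_imp_le order_trans)
    qed
    then show False using not_monomial by blast
  qed
  then show ?thesis using r1 r2 by (metis linorder_neqE)
qed

lemma quasi_opt_radius_minimizes:
  fixes f :: "complex \<Rightarrow> complex"
  assumes f: "entire_transcendental f" and k: "(deriv ^^ k) f 0 \<noteq> 0" "k < n"
  shows "0 < quasi_opt_radius f n"
    and "\<forall>s>0. max_mod f (quasi_opt_radius f n) / quasi_opt_radius f n ^ n \<le> max_mod f s / s ^ n"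
proof -
  have hol: "f holomorphic_on UNIV" and not_monomial: "\<nexists>c. \<forall>z. f z = c * z ^ n"
    using f unfolding entire_transcendental_def by (auto simp flip: poly_monom)
  have "\<exists>!r. 0 < r \<and> (\<forall>s>0. max_mod f r / r ^ n \<le> max_mod f s / s ^ n)"
    using max_mod_div_power_has_minimizer[OF f k] max_mod_div_power_minimizer_unique[OF hol not_monomial]
    by (intro ex_ex1I) blast+
  from theI'[OF this] show "0 < quasi_opt_radius f n"
    and "\<forall>s>0. max_mod f (quasi_opt_radius f n) / quasi_opt_radius f n ^ n \<le> max_mod f s / s ^ n"
    unfolding quasi_opt_radius_def by auto
qed

lemma max_mod_pos:
  fixes f :: "complex \<Rightarrow> complex"
  assumes "f holomorphic_on cball 0 r" "0 < r" "(deriv ^^ k) f 0 \<noteq> 0"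
  shows "0 < max_mod f r"
proof -
  have "0 < norm ((deriv ^^ k) f 0) / fact k * r ^ k" using assms(2,3) by simp
  also have "\<dots> \<le> max_mod f r" by (rule coeff_mult_power_le_max_mod[OF assms(1,2)])
  finally show ?thesis .
qed

lemma ln_max_mod_ge:
  fixes f :: "complex \<Rightarrow> complex"
  assumes "f holomorphic_on cball 0 r" "0 < r" "(deriv ^^ k) f 0 \<noteq> 0"
  shows "ln (norm ((deriv ^^ k) f 0) / fact k) + real k * ln r \<le> ln (max_mod f r)"
proof -
  define a where "a = norm ((deriv ^^ k) f 0) / fact k"
  have a: "0 < a" using assms(3) by (simp add: a_def)
  then have "ln a + real k * ln r = ln (a * r ^ k)"
    using assms(2) by (simp add: ln_mult ln_realpow)
  also have "\<dots> \<le> ln (max_mod f r)"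
    by (rule ln_mono) (use a assms coeff_mult_power_le_max_mod[OF assms(1,2), of k] in \<open>simp_all add: a_def\<close>)
  finally show ?thesis unfolding a_def .
qed

lemma quasi_opt_radius_minimizes_ln:
  fixes f :: "complex \<Rightarrow> complex"
  assumes f: "entire_transcendental f" and k: "(deriv ^^ k) f 0 \<noteq> 0" "k < n" and s: "0 < s"
  shows "ln (max_mod f (quasi_opt_radius f n)) - real n * ln (quasi_opt_radius f n)
           \<le> ln (max_mod f s) - real n * ln s"
proof -
  let ?r = "quasi_opt_radius f n"
  note hol = entire_transcendental_holomorphic_on[OF f]
  have r: "0 < ?r" by (rule quasi_opt_radius_minimizes(1)[OF f k])
  have pos: "0 < max_mod f ?r" "0 < max_mod f s"
    using max_mod_pos[OF hol _ k(1)] r s by auto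
  have "ln (max_mod f ?r / ?r ^ n) \<le> ln (max_mod f s / s ^ n)"
    using quasi_opt_radius_minimizes(2)[OF f k] r s pos by simp
  then show ?thesis
    using r s pos by (simp add: ln_div ln_realpow)
qed

theorem theorem8p2:
  fixes f :: "complex \<Rightarrow> complex" and \<rho> \<tau> :: real
  assumes "perfectly_regular_growth f \<rho> \<tau>"
  shows "(\<lambda>n. quasi_opt_radius f n) \<sim>[sequentially] (\<lambda>n. (real n / (\<tau> * \<rho>)) powr (1 / \<rho>))"
proof -
  have f: "entire_transcendental f" and rho: "0 < \<rho>" and tau: "0 < \<tau>"
    and growth: "((\<lambda>x. ln (max_mod f x) / x powr \<rho>) \<longlongrightarrow> \<tau>) at_top"
    using assms unfolding perfectly_regular_growth_def by auto
  obtain k where k: "(deriv ^^ k) f 0 \<noteq> 0"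
    using entire_transcendental_deriv_nonzero_above[OF f, of 0] by blast
  have lower: "ln (norm ((deriv ^^ k) f 0) / fact k) + real k * ln x \<le> ln (max_mod f x)" if "0 < x" for x
    using that k by (intro ln_max_mod_ge entire_transcendental_holomorphic_on[OF f])
  have minimizes: "\<forall>\<^sub>F n in sequentially. 0 < quasi_opt_radius f n \<and> (\<forall>s>0.
      ln (max_mod f (quasi_opt_radius f n)) - real n * ln (quasi_opt_radius f n) \<le> ln (max_mod f s) - real n * ln s)"
    using eventually_gt_at_top[of k]
    by eventually_elim (use quasi_opt_radius_minimizes(1) quasi_opt_radius_minimizes_ln f k in blast)
  have r_at_top: "filterlim (quasi_opt_radius f) at_top sequentially"
    using lower minimizes by (rule minimizers_tendsto_at_top)
  have "((\<lambda>n. quasi_opt_radius f n powr \<rho> / real n) \<longlongrightarrow> 1 / (\<tau> * \<rho>)) sequentially"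
    by (rule minimizer_powr_ratio_tendsto[OF rho tau growth r_at_top]) (use minimizes in \<open>auto elim: eventually_mono\<close>)
  then show ?thesis
    using rho tau minimizes by (intro asymp_equiv_of_powr_ratio_tendsto) (auto elim: eventually_mono)
qed

end
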